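(* Let $X$ be a real normed space and $\mathcal M=\{M_1,\dots,M_n\}$ a finite family of nonempty closed bounded convex subsets of $X$, with $\Sigma(\mathcal M)\neq\emptyset$ and $d=(d_1,\dots,d_n)\in\Omega(\mathcal M)$. Then for every $K\in\Sigma_d(\mathcal M)$ there exists $i$ with $d_i=\sup_{x\in M_i}|x\,K|$.
   Context: For $p\in X$ and $A\subset X$: $|p\,A|=\inf_{a\in A}|p\,a|$ ($=\infty$ if $A=\emptyset$). For nonempty $A,B$, $d_H(A,B)=\max\{\sup_{a\in A}|a\,B|,\sup_{b\in B}|b\,A|\}\in[0,\infty]$. Let $\mathcal P^f_{\mathrm{Cl}}(X)$ be the set of all nonempty closed $Y\subset X$ with $d_H(Y,M_1)<\infty$ (the finiteness class of the $M_i$). $S_{\mathcal M}(Y)=\sum_i d_H(Y,M_i)$; $\Sigma(\mathcal M)$ is the set of minimizers of $S_{\mathcal M}$ over $\mathcal P^f_{\mathrm{Cl}}(X)$; for $K\in\Sigma(\mathcal M)$, $d(K)=(d_H(K,M_1),\dots,d_H(K,M_n))$; $\Omega(\mathcal M)=\{d(K):K\in\Sigma(\mathcal M)\}$; for $d\in\Omega(\mathcal M)$, $\Sigma_d(\mathcal M)=\{K\in\Sigma(\mathcal M):d(K)=d\}$. *)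

theory Defs
  imports "HOL-Analysis.Analysis"
begin

text \<open>Distance from a point to a set, valued in the extended reals (infinite for the empty set).\<close>
definition pt_set_dist :: "'a::metric_space \<Rightarrow> 'a set \<Rightarrow> ereal" where
  "pt_set_dist p A = (INF a\<in>A. ereal (dist p a))"

definition hdist :: "'a::metric_space set \<Rightarrow> 'a set \<Rightarrow> ereal" where
  "hdist A B = max (SUP a\<in>A. pt_set_dist a B) (SUP b\<in>B. pt_set_dist b A)"

text \<open>The family M_1..M_n is represented as M 0, ..., M (n-1).\<close>
definition PfCl :: "(nat \<Rightarrow> 'a::metric_space set) \<Rightarrow> 'a set set" where
  "PfCl M = {Y. Y \<noteq> {} \<and> closed Y \<and> hdist Y (M 0) < \<infinity>}"

definition S_M :: "(nat \<Rightarrow> 'a::metric_space set) \<Rightarrow> nat \<Rightarrow> 'a set \<Rightarrow> ereal" where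
  "S_M M n Y = (\<Sum>i<n. hdist Y (M i))"

definition Sigma_M :: "(nat \<Rightarrow> 'a::metric_space set) \<Rightarrow> nat \<Rightarrow> 'a set set" where
  "Sigma_M M n = {K \<in> PfCl M. \<forall>Y \<in> PfCl M. S_M M n K \<le> S_M M n Y}"

definition dvec :: "(nat \<Rightarrow> 'a::metric_space set) \<Rightarrow> nat \<Rightarrow> 'a set \<Rightarrow> ereal list" where
  "dvec M n K = map (\<lambda>i. hdist K (M i)) [0..<n]"

definition Omega_M :: "(nat \<Rightarrow> 'a::metric_space set) \<Rightarrow> nat \<Rightarrow> ereal list set" where
  "Omega_M M n = dvec M n ` Sigma_M M n"

definition Sigma_d :: "(nat \<Rightarrow> 'a::metric_space set) \<Rightarrow> nat \<Rightarrow> ereal list \<Rightarrow> 'a set set" where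
  "Sigma_d M n d = {K \<in> Sigma_M M n. dvec M n K = d}"

end

theory Submission
  imports Defs
begin

(* Suppose that for every i the distance d_i is carried by the excess of K over M_i,
   i.e. sup {|k M_i| : k in K} = d_i > sup {|x K| : x in M_i}.  Then every M_i has a point
   of K strictly closer than d_i, and since x |-> |x M_i| is convex, the mean c of one such
   point per i is strictly closer than d_i to every M_i.  Shrinking K towards c,
   Y = (1 - t) K + t c, lowers every sup {|y M_i| : y in Y} by a fixed multiple of t, while
   points move by O(t), so for small t the other half sup {|x Y| : x in M_i} stays below d_i.
   Hence S(Y) < S(K), contradicting minimality. *)

lemma infdist_lessE:
  assumes "infdist x A < e" "A \<noteq> {}"
  obtains a where "a \<in> A" "dist x a < e"
  using setdist_ltE[of "{x}" A e] assms by (auto simp: infdist_eq_setdist)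

lemma convex_on_infdist:
  fixes M :: "'a::real_normed_vector set"
  assumes "convex M"
  shows "convex_on UNIV (\<lambda>x. infdist x M)"
proof (cases "M = {}")
  case True
  then show ?thesis by (simp add: infdist_def convex_on_const)
next
  case False
  show ?thesis
  proof (rule convex_onI)
    fix t :: real and a b :: 'a
    assume t: "0 < t" "t < 1"
    show "infdist ((1-t) *\<^sub>R a + t *\<^sub>R b) M \<le> (1-t) * infdist a M + t * infdist b M"
    proof (rule field_le_epsilon)
      fix e :: real assume "e > 0"
      then obtain m1 m2 where m: "m1 \<in> M" "dist a m1 < infdist a M + e"
          "m2 \<in> M" "dist b m2 < infdist b M + e"
        using infdist_lessE[OF _ False] by (metis less_add_same_cancel1)
      have "(1-t) *\<^sub>R m1 + t *\<^sub>R m2 \<in> M"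
        using assms m t by (intro convexD) auto
      then have "infdist ((1-t) *\<^sub>R a + t *\<^sub>R b) M
                   \<le> norm ((1-t) *\<^sub>R (a - m1) + t *\<^sub>R (b - m2))"
        by (rule infdist_le2) (simp add: dist_norm algebra_simps)
      also have "\<dots> \<le> (1-t) * dist a m1 + t * dist b m2"
        using norm_triangle_ineq[of "(1-t) *\<^sub>R (a - m1)" "t *\<^sub>R (b - m2)"] t
        by (simp add: dist_norm)
      also have "\<dots> \<le> (1-t) * (infdist a M + e) + t * (infdist b M + e)"
        using m t by (intro add_mono mult_left_mono) auto
      finally show "infdist ((1-t) *\<^sub>R a + t *\<^sub>R b) M \<le> (1-t) * infdist a M + t * infdist b M + e"
        by (simp add: algebra_simps)
    qed
  qed simp
qed

lemma infdist_image_le: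
  assumes "K \<noteq> {}" "\<And>k. k \<in> K \<Longrightarrow> dist k (f k) \<le> r"
  shows "infdist x (f ` K) \<le> infdist x K + r"
proof -
  have "infdist x (f ` K) - r \<le> dist x k" if "k \<in> K" for k
    using infdist_le[of "f k" "f ` K" x] dist_triangle[of x "f k" k] assms(2)[OF that] that
    by (simp add: dist_commute)
  then have "infdist x (f ` K) - r \<le> infdist x K"
    unfolding infdist_notempty[OF assms(1)] using assms(1) by (intro cINF_greatest) auto
  then show ?thesis by simp
qed

lemma bounded_if_infdist_le:
  fixes A B :: "'a::real_normed_vector set"
  assumes "bounded B" "B \<noteq> {}" "\<And>a. a \<in> A \<Longrightarrow> infdist a B \<le> D"
  shows "bounded A"
proof -
  obtain r where r: "\<And>b. b \<in> B \<Longrightarrow> norm b \<le> r"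
    using assms(1) bounded_iff by blast
  have "norm a \<le> r + D + 1" if a: "a \<in> A" for a
  proof -
    obtain b where "b \<in> B" "dist a b < D + 1"
      using infdist_lessE[of a B "D + 1"] assms(2) assms(3)[OF a] by force
    then show ?thesis using r[of b] norm_triangle_sub[of a b] by (simp add: dist_norm)
  qed
  then show ?thesis by (auto simp: bounded_iff)
qed

lemma closed_affine_image:
  fixes K :: "'a::real_normed_vector set"
  assumes "closed K"
  shows "closed ((\<lambda>k. a *\<^sub>R k + b) ` K)"
proof -
  have "(\<lambda>k. a *\<^sub>R k + b) ` K = (+) b ` (\<lambda>k. a *\<^sub>R k) ` K"
    by (auto simp: image_image add.commute)
  then show ?thesis by (simp add: closed_translation closed_scaling assms)
qed

lemma convex_on_mean_less:
  fixes f :: "'a::real_vector \<Rightarrow> real"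
  assumes "convex_on UNIV f" "j < n" "\<And>i. i < n \<Longrightarrow> f (p i) \<le> b" "f (p j) < b"
  shows "f (\<Sum>i<n. (1 / real n) *\<^sub>R p i) < b"
proof -
  have "f (\<Sum>i<n. (1 / real n) *\<^sub>R p i) \<le> (\<Sum>i<n. (1 / real n) * f (p i))"
    using assms(2) by (intro convex_on_sum[OF _ _ assms(1)]) auto
  also have "\<dots> < (\<Sum>i<n. (1 / real n) * b)"
    using assms by (intro sum_strict_mono_ex1) (auto intro!: divide_right_mono divide_strict_right_mono)
  also have "\<dots> = b" using assms(2) by simp
  finally show ?thesis .
qed

lemma finite_pos_lower_bound:
  fixes f :: "'b \<Rightarrow> real"
  assumes "finite I" "\<And>i. i \<in> I \<Longrightarrow> 0 < f i"
  obtains e where "0 < e" "\<And>i. i \<in> I \<Longrightarrow> e \<le> f i"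
proof
  show "0 < Min (insert 1 (f ` I))" using assms by simp
  show "Min (insert 1 (f ` I)) \<le> f i" if "i \<in> I" for i
    using assms(1) that by (intro Min_le) auto
qed

lemma convex_hull_point_closer:
  fixes M :: "nat \<Rightarrow> 'a::real_normed_vector set"
  assumes "0 < n" "\<And>i. i < n \<Longrightarrow> convex (M i)"
    and K_near: "\<And>i k. i < n \<Longrightarrow> k \<in> K \<Longrightarrow> infdist k (M i) \<le> D i"
    and K_nearer: "\<And>i. i < n \<Longrightarrow> \<exists>k\<in>K. infdist k (M i) < D i"
  obtains c where "c \<in> convex hull K" "\<And>i. i < n \<Longrightarrow> infdist c (M i) < D i"
proof -
  obtain p where p: "\<And>i. i < n \<Longrightarrow> p i \<in> K \<and> infdist (p i) (M i) < D i"
    using K_nearer by metis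
  define c where "c = (\<Sum>i<n. (1 / real n) *\<^sub>R p i)"
  have "c \<in> convex hull K"
    unfolding c_def using \<open>0 < n\<close> p
    by (intro convex_sum convex_convex_hull) (auto intro: hull_inc)
  moreover have "infdist c (M i) < D i" if "i < n" for i
    unfolding c_def using that p K_near
    by (intro convex_on_mean_less[OF convex_on_infdist]) (auto simp: assms(2))
  ultimately show ?thesis by (rule that)
qed

lemma homothetic_image_closer:
  fixes M :: "nat \<Rightarrow> 'a::real_normed_vector set"
  assumes "0 < n" and M: "\<And>i. i < n \<Longrightarrow> M i \<noteq> {} \<and> convex (M i)"
    and K: "K \<noteq> {}" "closed K" "bounded K"
    and K_near: "\<And>i k. i < n \<Longrightarrow> k \<in> K \<Longrightarrow> infdist k (M i) \<le> D i"
    and M_near: "\<And>i x. i < n \<Longrightarrow> x \<in> M i \<Longrightarrow> infdist x K \<le> R i"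
    and R_less: "\<And>i. i < n \<Longrightarrow> R i < D i"
  obtains Y s where "Y \<noteq> {}" "closed Y" "0 < s"
    "\<And>i y. i < n \<Longrightarrow> y \<in> Y \<Longrightarrow> infdist y (M i) \<le> D i - s"
    "\<And>i x. i < n \<Longrightarrow> x \<in> M i \<Longrightarrow> infdist x Y \<le> D i - s"
proof -
  have K_nearer: "\<exists>k\<in>K. infdist k (M i) < D i" if i: "i < n" for i
  proof -
    obtain x where x: "x \<in> M i" using M[OF i] by auto
    have "infdist x K < D i" using M_near[OF i x] R_less[OF i] by simp
    then obtain k where "k \<in> K" "dist x k < D i" using infdist_lessE K(1) by blast
    moreover have "infdist k (M i) \<le> dist x k" using infdist_le[OF x, of k] by (simp add: dist_commute)
    ultimately show ?thesis by (meson le_less_trans)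
  qed
  have M_convex: "convex (M i)" if "i < n" for i using M[OF that] by (rule conjunct2)
  obtain c where c: "c \<in> convex hull K" "\<And>i. i < n \<Longrightarrow> infdist c (M i) < D i"
    using convex_hull_point_closer[of n M K D, OF \<open>0 < n\<close> M_convex K_near K_nearer] by blast
  obtain \<eta> where \<eta>: "0 < \<eta>" "\<And>i. i < n \<Longrightarrow> \<eta> \<le> D i - infdist c (M i)"
    using finite_pos_lower_bound[of "{..<n}" "\<lambda>i. D i - infdist c (M i)"] c(2) by auto
  obtain g where g: "0 < g" "\<And>i. i < n \<Longrightarrow> g \<le> D i - R i"
    using finite_pos_lower_bound[of "{..<n}" "\<lambda>i. D i - R i"] R_less by auto
  obtain r where r: "0 < r" "\<And>x. x \<in> convex hull K \<Longrightarrow> norm x \<le> r"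
    using bounded_convex_hull[OF K(3)] bounded_pos by blast
  (* Moving K towards c displaces each point by at most 2 t r <= g / 2, half the margin g. *)
  define t where "t = min (1/2) (g / (4 * r))"
  define s where "s = min (t * \<eta>) (g / 2)"
  define Y where "Y = (\<lambda>k. (1 - t) *\<^sub>R k + t *\<^sub>R c) ` K"
  have t: "0 < t" "t \<le> 1/2" "2 * t * r \<le> g / 2"
    using g(1) r(1) by (auto simp: t_def min_def field_simps)
  have "Y \<noteq> {}" "closed Y"
    using K by (auto simp: Y_def intro: closed_affine_image)
  moreover have "0 < s" using t \<eta> g by (simp add: s_def)
  moreover have "infdist y (M i) \<le> D i - s" if i: "i < n" and y: "y \<in> Y" for i y
  proof -
    obtain k where k: "k \<in> K" "y = (1 - t) *\<^sub>R k + t *\<^sub>R c" using y by (auto simp: Y_def)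
    have "infdist y (M i) \<le> (1 - t) * infdist k (M i) + t * infdist c (M i)"
      unfolding k(2) using t by (intro convex_onD[OF convex_on_infdist] M_convex[OF i]) auto
    also have "\<dots> \<le> (1 - t) * D i + t * (D i - \<eta>)"
      using t K_near[OF i k(1)] \<eta>(2)[OF i] by (intro add_mono mult_left_mono) auto
    finally show ?thesis by (simp add: s_def algebra_simps)
  qed
  moreover have "infdist x Y \<le> D i - s" if i: "i < n" and x: "x \<in> M i" for i x
  proof -
    have "dist k ((1 - t) *\<^sub>R k + t *\<^sub>R c) \<le> 2 * t * r" if "k \<in> K" for k
    proof -
      have "norm (k - c) \<le> 2 * r"
        using norm_triangle_ineq4[of k c] r(2)[OF hull_inc[OF that]] r(2)[OF c(1)] by simp
      then show ?thesis
        using t by (simp add: dist_norm algebra_simps flip: scaleR_diff_right)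
    qed
    then have "infdist x Y \<le> infdist x K + 2 * t * r"
      unfolding Y_def by (rule infdist_image_le[OF K(1)])
    then show ?thesis using M_near[OF i x] g(2)[OF i] t(3) by (simp add: s_def)
  qed
  ultimately show ?thesis by (rule that)
qed

lemma pt_set_dist_eq_infdist:
  assumes "A \<noteq> {}"
  shows "pt_set_dist x A = ereal (infdist x A)"
proof -
  have "bdd_below ((\<lambda>a. dist x a) ` A)" by (rule bdd_belowI[of _ 0]) auto
  then have "ereal (Inf ((\<lambda>a. dist x a) ` A)) = (INF a\<in>A. ereal (dist x a))"
    using assms by (subst ereal_Inf') (auto simp: image_comp)
  then show ?thesis
    using assms by (simp add: pt_set_dist_def infdist_notempty)
qed

lemma pt_set_dist_nonneg: "0 \<le> pt_set_dist x A"
  unfolding pt_set_dist_def by (auto intro: INF_greatest)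

lemma SUP_pt_set_dist_le_iff:
  assumes "B \<noteq> {}"
  shows "(SUP a\<in>A. pt_set_dist a B) \<le> ereal c \<longleftrightarrow> (\<forall>a\<in>A. infdist a B \<le> c)"
  using assms by (simp add: SUP_le_iff pt_set_dist_eq_infdist)

lemma hdist_le_iff:
  assumes "A \<noteq> {}" "B \<noteq> {}"
  shows "hdist A B \<le> ereal c \<longleftrightarrow> (\<forall>a\<in>A. infdist a B \<le> c) \<and> (\<forall>b\<in>B. infdist b A \<le> c)"
  using assms by (simp add: hdist_def SUP_pt_set_dist_le_iff)

lemma hdist_nonneg:
  assumes "A \<noteq> {}"
  shows "0 \<le> hdist A B"
proof -
  obtain a where "a \<in> A" using assms by blast
  then have "0 \<le> (SUP a\<in>A. pt_set_dist a B)"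
    by (meson SUP_upper2 pt_set_dist_nonneg)
  then show ?thesis by (simp add: hdist_def le_max_iff_disj)
qed

lemma hdist_bounded_less_infinity:
  fixes A B :: "'a::real_normed_vector set"
  assumes "bounded A" "bounded B" "A \<noteq> {}" "B \<noteq> {}"
  shows "hdist A B < \<infinity>"
proof -
  obtain r where r: "\<And>x. x \<in> A \<union> B \<Longrightarrow> norm x \<le> r"
    using assms(1,2) bounded_Un bounded_iff by metis
  have "infdist x Z \<le> 2 * r"
    if x: "x \<in> A \<union> B" and Z: "Z \<subseteq> A \<union> B" "Z \<noteq> {}" for x Z
  proof -
    obtain z where z: "z \<in> Z" using Z(2) by blast
    have "dist x z \<le> norm x + norm z" by (simp add: dist_norm norm_triangle_ineq4)
    then show ?thesis using infdist_le[OF z, of x] r[OF x] r[of z] z Z(1) by force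
  qed
  then have "hdist A B \<le> ereal (2 * r)"
    using assms(3,4) by (subst hdist_le_iff) auto
  then show ?thesis using le_less_trans by fastforce
qed

lemma Sigma_M_hdist_less_infinity:
  fixes M :: "nat \<Rightarrow> 'a::real_normed_vector set"
  assumes "0 < n" "\<And>i. i < n \<Longrightarrow> M i \<noteq> {} \<and> bounded (M i)" "closed (M 0)"
    and "K \<in> Sigma_M M n" "i < n"
  shows "hdist K (M i) < \<infinity>"
proof -
  have M_finite: "hdist (M j) (M i) < \<infinity>" if "j < n" "i < n" for i j
    using assms(2) that by (intro hdist_bounded_less_infinity) auto
  have "M 0 \<in> PfCl M"
    using assms(2,3) M_finite[of 0 0] \<open>0 < n\<close> by (auto simp: PfCl_def)
  then have "S_M M n K \<le> S_M M n (M 0)"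
    using assms(4) by (auto simp: Sigma_M_def)
  also have "S_M M n (M 0) < \<infinity>"
    using M_finite[of 0] \<open>0 < n\<close> by (auto simp: S_M_def sum_Pinfty less_top)
  finally have "hdist K (M i) \<noteq> \<infinity>"
    using \<open>i < n\<close> by (auto simp: S_M_def sum_Pinfty)
  then show ?thesis by (simp add: less_top)
qed

lemma exists_PfCl_S_M_less:
  fixes M :: "nat \<Rightarrow> 'a::real_normed_vector set"
  assumes "0 < n" and M: "\<And>i. i < n \<Longrightarrow> M i \<noteq> {} \<and> bounded (M i) \<and> convex (M i)"
    and K: "K \<in> PfCl M"
    and K_finite: "\<And>i. i < n \<Longrightarrow> hdist K (M i) < \<infinity>"
    and M_nearer: "\<And>i. i < n \<Longrightarrow> (SUP x\<in>M i. pt_set_dist x K) < hdist K (M i)"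
  obtains Y where "Y \<in> PfCl M" "S_M M n Y < S_M M n K"
proof -
  have K_ne: "K \<noteq> {}" and "closed K" using K by (auto simp: PfCl_def)
  define D where "D i = real_of_ereal (hdist K (M i))" for i
  have D: "hdist K (M i) = ereal (D i)" if "i < n" for i
    using hdist_nonneg[OF K_ne, of "M i"] K_finite[OF that]
    unfolding D_def by (cases "hdist K (M i)") auto
  have "\<exists>r. (SUP x\<in>M i. pt_set_dist x K) < ereal r \<and> r < D i" if "i < n" for i
    using ereal_dense2[OF M_nearer[OF that]] D[OF that] by auto
  then obtain R where R: "\<And>i. i < n \<Longrightarrow> (SUP x\<in>M i. pt_set_dist x K) < ereal (R i) \<and> R i < D i"
    by metis
  have K_near: "infdist k (M i) \<le> D i" if "i < n" "k \<in> K" for i k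
    using hdist_le_iff[OF K_ne, of "M i" "D i"] D M that by auto
  have M_near: "infdist x K \<le> R i" if "i < n" "x \<in> M i" for i x
    using SUP_pt_set_dist_le_iff[OF K_ne, of "M i" "R i"] R[of i] that by (auto simp: less_imp_le)
  have "bounded K"
    using M[OF \<open>0 < n\<close>] K_near[OF \<open>0 < n\<close>] by (intro bounded_if_infdist_le[of "M 0" K "D 0"]) auto
  then obtain Y s where Y: "Y \<noteq> {}" "closed Y" "0 < s"
    and "\<And>i y. i < n \<Longrightarrow> y \<in> Y \<Longrightarrow> infdist y (M i) \<le> D i - s"
    and "\<And>i x. i < n \<Longrightarrow> x \<in> M i \<Longrightarrow> infdist x Y \<le> D i - s"
    using homothetic_image_closer[of n M K D R, OF \<open>0 < n\<close> _ K_ne \<open>closed K\<close> _ K_near M_near] M R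
    by blast
  then have Y_near: "hdist Y (M i) \<le> ereal (D i - s)" if "i < n" for i
    using hdist_le_iff[OF \<open>Y \<noteq> {}\<close>, of "M i"] M[OF that] that by auto
  have "Y \<in> PfCl M"
    using Y Y_near[OF \<open>0 < n\<close>] by (auto simp: PfCl_def intro: le_less_trans)
  moreover have "S_M M n Y < S_M M n K"
  proof -
    have "S_M M n Y \<le> (\<Sum>i<n. ereal (D i - s))" unfolding S_M_def by (intro sum_mono Y_near) auto
    also have "\<dots> < (\<Sum>i<n. ereal (D i))" using \<open>0 < n\<close> \<open>0 < s\<close> by (simp add: sum_subtractf)
    also have "\<dots> = S_M M n K" by (simp add: S_M_def D)
    finally show ?thesis .
  qed
  ultimately show ?thesis by (rule that)
qed

theorem mainTheorem18:
  fixes M :: "nat \<Rightarrow> 'a::real_normed_vector set" and n :: nat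
    and d :: "ereal list" and K :: "'a set"
  assumes "n \<ge> 1"
    and "\<forall>i<n. M i \<noteq> {} \<and> closed (M i) \<and> bounded (M i) \<and> convex (M i)"
    and "Sigma_M M n \<noteq> {}"
    and "d \<in> Omega_M M n"
    and "K \<in> Sigma_d M n d"
  shows "\<exists>i<n. d ! i = (SUP x\<in>M i. pt_set_dist x K)"
proof (rule ccontr)
  assume no_sup_attained: "\<not> ?thesis"
  have "0 < n" using assms(1) by simp
  have K: "K \<in> Sigma_M M n" and d: "\<And>i. i < n \<Longrightarrow> d ! i = hdist K (M i)"
    using assms(5) by (auto simp: Sigma_d_def dvec_def)
  have M: "\<And>i. i < n \<Longrightarrow> M i \<noteq> {} \<and> bounded (M i) \<and> convex (M i)"
    using assms(2) by blast
  have M_nearer: "(SUP x\<in>M i. pt_set_dist x K) < hdist K (M i)" if "i < n" for i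
    using no_sup_attained d[OF that] that by (auto simp: hdist_def less_le)
  have K_finite: "hdist K (M i) < \<infinity>" if "i < n" for i
    using Sigma_M_hdist_less_infinity[OF \<open>0 < n\<close> _ _ K that] assms(2) \<open>0 < n\<close> by blast
  have "K \<in> PfCl M" using K by (simp add: Sigma_M_def)
  then obtain Y where "Y \<in> PfCl M" "S_M M n Y < S_M M n K"
    using exists_PfCl_S_M_less[of n M K, OF \<open>0 < n\<close> M _ K_finite M_nearer] by blast
  then show False using K by (auto simp: Sigma_M_def not_le[symmetric])
qed

end
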